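(* Let $N\in\mathbb{N}$, $a\in\{1,\dots,N\}$, and $\varepsilon,p,q,C\in\mathbb{R}$ with $\varepsilon>0$, $p>1$, $C>0$. Let $(M_k)_{k\ge0}$ be real numbers with $|M_k|<\dfrac{C\log^q(Nk+N+a)}{k^p+\varepsilon}$ for all $k\in\mathbb{N}_0$. Then $$\lim_{n\to\infty}\sum_{k=0}^n|M_k|\frac{N\left[\left(\frac{a}{N}\right)_{n+1}\right]^2}{(n-k)!\left(\frac{2a}{N}\right)_{n+k+1}}=\frac{N}{B\left(\frac{a}{N},\frac{a}{N}\right)}\sum_{k=0}^\infty|M_k|.$$
   Context: $(x)_m$ is the Pochhammer symbol and $B(x,y)=\Gamma(x)\Gamma(y)/\Gamma(x+y)$ is the Beta function. *)

theory Defs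
  imports "HOL-Analysis.Analysis"
begin

end

theory Submission
  imports Defs "HOL-Real_Asymp.Real_Asymp"
begin

text \<open>
  For fixed \<open>k\<close> the kernel \<open>w n k = (x)\<^sub>n\<^sub>+\<^sub>1\<^sup>2 / ((n - k)! (2x)\<^sub>n\<^sub>+\<^sub>k\<^sub>+\<^sub>1)\<close> is \<open>w n 0\<close>
  times the \<open>k\<close> factors \<open>(n - j) / (2x + n + j + 1)\<close>, each in \<open>[0, 1]\<close> and tending to \<open>1\<close>.
  Moreover \<open>w n 0\<close> is \<open>\<Gamma>\<^sub>n(2x) / \<Gamma>\<^sub>n(x)\<^sup>2\<close> for Euler's Gamma series \<open>\<Gamma>\<^sub>n\<close>, so it tends to
  \<open>\<Gamma>(2x) / \<Gamma>(x)\<^sup>2 = 1 / B(x, x)\<close>. Hence the kernel is bounded uniformly in \<open>k \<le> n\<close>; as the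
  growth bound makes \<open>\<Sum> |M\<^sub>k|\<close> converge, Tannery's theorem passes the limit under the sum.
\<close>

lemma tendsto_sum_atMost_bounded_kernel:
  fixes m :: "nat \<Rightarrow> real" and w :: "nat \<Rightarrow> nat \<Rightarrow> real"
  assumes summable: "summable (\<lambda>k. \<bar>m k\<bar>)"
    and lim: "\<And>k. (\<lambda>n. w n k) \<longlonglongrightarrow> L"
    and bound: "\<And>n k. k \<le> n \<Longrightarrow> \<bar>w n k\<bar> \<le> B"
  shows "(\<lambda>n. \<Sum>k\<le>n. m k * w n k) \<longlonglongrightarrow> L * (\<Sum>k. m k)"
proof -
  define A where "A k n = (if k \<le> n then m k * w n k else 0)" for k n
  have "B \<ge> 0"
    using bound[of 0 0] by simp
  have "(\<lambda>n. \<Sum>k. A k n) \<longlonglongrightarrow> (\<Sum>k. m k * L)"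
  proof (rule conjunct2[OF conjunct2[OF tannerys_theorem]])
    show "(\<lambda>n. A k n) \<longlonglongrightarrow> m k * L" for k
    proof (rule Lim_transform_eventually)
      show "(\<lambda>n. m k * w n k) \<longlonglongrightarrow> m k * L"
        using lim by (intro tendsto_mult_left)
      show "\<forall>\<^sub>F n in sequentially. m k * w n k = A k n"
        using eventually_ge_at_top[of k] by eventually_elim (simp add: A_def)
    qed
    show "\<forall>\<^sub>F (k, n) in at_top \<times>\<^sub>F sequentially. norm (A k n) \<le> \<bar>m k\<bar> * B"
      using bound \<open>B \<ge> 0\<close> by (intro always_eventually) (auto simp: A_def abs_mult mult_left_mono)
    show "summable (\<lambda>k. \<bar>m k\<bar> * B)"
      using summable by (rule summable_mult2)
  qed simp
  moreover have "(\<Sum>k. A k n) = (\<Sum>k\<le>n. m k * w n k)" for n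
    by (subst suminf_finite[of "{..n}"]) (auto simp: A_def)
  moreover have "(\<Sum>k. m k * L) = L * (\<Sum>k. m k)"
    using summable_rabs_cancel[OF summable] by (simp add: suminf_mult mult.commute)
  ultimately show ?thesis
    by simp
qed

lemma summable_ln_powr_div_powr_add:
  fixes c d p q \<epsilon> :: real
  assumes "c > 0" "p > 1" "\<epsilon> > 0"
  shows "summable (\<lambda>k::nat. ln (c * real k + d) powr q / (real k powr p + \<epsilon>))"
proof (rule summable_comparison_test_bigo)
  \<comment> \<open>The logarithmic factor is absorbed by \<open>k powr ((p - 1) / 2)\<close>.\<close>
  show "summable (\<lambda>k::nat. norm (real k powr (- (p + 1) / 2)))"
    using assms by (simp add: summable_real_powr_iff)
  show "(\<lambda>k::nat. ln (c * real k + d) powr q / (real k powr p + \<epsilon>))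
          \<in> O(\<lambda>k. real k powr (- (p + 1) / 2))"
    using assms by real_asymp
qed

definition beta_kernel :: "real \<Rightarrow> nat \<Rightarrow> nat \<Rightarrow> real" where
  "beta_kernel x n k = pochhammer x (n + 1) ^ 2 / (fact (n - k) * pochhammer (2 * x) (n + k + 1))"

lemma beta_kernel_nonneg: "x > 0 \<Longrightarrow> beta_kernel x n k \<ge> 0"
  unfolding beta_kernel_def by (intro divide_nonneg_pos mult_pos_pos) (auto intro!: pochhammer_pos)

lemma beta_kernel_Suc:
  assumes "x > 0" "k < n"
  shows "beta_kernel x n (Suc k) = beta_kernel x n k * ((real n - real k) / (2 * x + real n + real k + 1))"
proof -
  define m where "m = real n - real k"
  define D where "D = 2 * x + real n + real k + 1"
  have fact_eq: "(fact (n - k) :: real) = m * fact (n - Suc k)"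
    using assms(2) by (simp add: m_def fact_reduce of_nat_diff)
  have pochhammer_eq: "pochhammer (2 * x) (n + Suc k + 1) = pochhammer (2 * x) (n + k + 1) * D"
    by (simp add: D_def pochhammer_Suc add_ac)
  have "pochhammer (2 * x) (n + k + 1) > 0" "D > 0" "m > 0"
    using assms by (auto simp: m_def D_def intro!: pochhammer_pos)
  then show ?thesis
    unfolding beta_kernel_def fact_eq pochhammer_eq m_def[symmetric] D_def[symmetric]
    by (simp add: field_simps)
qed

lemma beta_kernel_eq_prod:
  assumes "x > 0" "k \<le> n"
  shows "beta_kernel x n k = beta_kernel x n 0 * (\<Prod>j<k. (real n - real j) / (2 * x + real n + real j + 1))"
  using assms(2) by (induction k) (simp_all add: beta_kernel_Suc[OF assms(1)])

lemma beta_kernel_le_beta_kernel_0: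
  assumes "x > 0" "k \<le> n"
  shows "beta_kernel x n k \<le> beta_kernel x n 0"
proof -
  have "(\<Prod>j<k. (real n - real j) / (2 * x + real n + real j + 1)) \<le> 1"
    using assms by (intro prod_le_1) auto
  then show ?thesis
    unfolding beta_kernel_eq_prod[OF assms] using beta_kernel_nonneg[OF assms(1), of n 0]
    by (rule mult_left_le)
qed

lemma beta_kernel_0_eq_Gamma_series:
  assumes "x > 0"
  shows "beta_kernel x n 0 = Gamma_series (2 * x) n / (Gamma_series x n)\<^sup>2"
proof -
  define E where "E = exp (x * ln (real n))"
  have Gamma_series_x: "Gamma_series x n = fact n * E / pochhammer x (n + 1)"
    by (simp add: Gamma_series_def E_def)
  have Gamma_series_2x: "Gamma_series (2 * x) n = fact n * E\<^sup>2 / pochhammer (2 * x) (n + 1)"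
    by (simp add: Gamma_series_def E_def exp_double[symmetric] mult_ac)
  have "pochhammer x (n + 1) > 0" "pochhammer (2 * x) (n + 1) > 0" "E > 0"
    using assms by (auto simp: E_def intro!: pochhammer_pos)
  then show ?thesis
    unfolding beta_kernel_def Gamma_series_x Gamma_series_2x by (simp add: field_simps power2_eq_square)
qed

lemma tendsto_beta_kernel_0:
  assumes "x > 0"
  shows "(\<lambda>n. beta_kernel x n 0) \<longlonglongrightarrow> 1 / Beta x x"
proof -
  have "(\<lambda>n. Gamma_series (2 * x) n / (Gamma_series x n)\<^sup>2) \<longlonglongrightarrow> Gamma (2 * x) / (Gamma x)\<^sup>2"
    using Gamma_real_pos[OF assms]
    by (intro tendsto_divide[OF Gamma_series_LIMSEQ tendsto_power[OF Gamma_series_LIMSEQ]]) simp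
  also have "Gamma (2 * x) / (Gamma x)\<^sup>2 = 1 / Beta x x"
    using Gamma_real_pos[OF assms] by (simp add: Beta_def power2_eq_square)
  finally show ?thesis
    by (simp only: beta_kernel_0_eq_Gamma_series[OF assms])
qed

lemma tendsto_beta_kernel:
  assumes "x > 0"
  shows "(\<lambda>n. beta_kernel x n k) \<longlonglongrightarrow> 1 / Beta x x"
proof -
  have factor: "(\<lambda>n. (real n - real j) / (2 * x + real n + real j + 1)) \<longlonglongrightarrow> 1" for j
    using assms by real_asymp
  have "(\<lambda>n. beta_kernel x n 0 * (\<Prod>j<k. (real n - real j) / (2 * x + real n + real j + 1)))
      \<longlonglongrightarrow> 1 / Beta x x * (\<Prod>j<k. 1)"
    by (intro tendsto_mult tendsto_beta_kernel_0[OF assms] tendsto_prod factor)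
  moreover have "\<forall>\<^sub>F n in sequentially.
      beta_kernel x n 0 * (\<Prod>j<k. (real n - real j) / (2 * x + real n + real j + 1)) = beta_kernel x n k"
    using eventually_ge_at_top[of k] by eventually_elim (rule beta_kernel_eq_prod[OF assms, symmetric])
  ultimately show ?thesis
    by (simp add: Lim_transform_eventually)
qed

lemma beta_kernel_bounded:
  assumes "x > 0"
  obtains B where "\<And>n k. k \<le> n \<Longrightarrow> \<bar>beta_kernel x n k\<bar> \<le> B"
proof -
  obtain B where B: "\<And>n. \<bar>beta_kernel x n 0\<bar> \<le> B"
    using convergent_imp_Bseq[OF convergentI[OF tendsto_beta_kernel_0[OF assms]]]
    by (auto simp: Bseq_def)
  have "\<bar>beta_kernel x n k\<bar> \<le> B" if "k \<le> n" for n k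
    using beta_kernel_le_beta_kernel_0[OF assms that] beta_kernel_nonneg[OF assms, of n k] B[of n]
    by linarith
  then show thesis
    by (rule that)
qed

theorem mainTheorem6:
  fixes N a :: nat and \<epsilon> p q C :: real and M :: "nat \<Rightarrow> real"
  assumes "a \<in> {1..N}" and "\<epsilon> > 0" and "p > 1" and "C > 0"
    and "\<And>k. \<bar>M k\<bar> < C * (ln (real (N * k + N + a))) powr q / (real k powr p + \<epsilon>)"
  shows "(\<lambda>n. \<Sum>k=0..n. \<bar>M k\<bar> * (real N * (pochhammer (real a / real N) (n + 1))\<^sup>2 /
            (fact (n - k) * pochhammer (2 * real a / real N) (n + k + 1))))
         \<longlonglongrightarrow> real N / Beta (real a / real N) (real a / real N) * (\<Sum>k. \<bar>M k\<bar>)"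
proof -
  define x where "x = real a / real N"
  have "x > 0"
    using assms(1) by (auto simp: x_def)
  have "summable (\<lambda>k. C * (ln (real N * real k + real (N + a)) powr q / (real k powr p + \<epsilon>)))"
    using assms(1-3) by (intro summable_mult summable_ln_powr_div_powr_add) auto
  then have "summable (\<lambda>k. \<bar>M k\<bar>)"
    by (rule summable_comparison_test'[where N = 0]) (use assms(5) in \<open>simp add: add.assoc less_imp_le\<close>)
  moreover obtain B where "\<And>n k. k \<le> n \<Longrightarrow> \<bar>beta_kernel x n k\<bar> \<le> B"
    using beta_kernel_bounded[OF \<open>x > 0\<close>] by blast
  ultimately have "(\<lambda>n. \<Sum>k\<le>n. \<bar>M k\<bar> * (real N * beta_kernel x n k)) \<longlonglongrightarrow> real N / Beta x x * (\<Sum>k. \<bar>M k\<bar>)"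
    using tendsto_mult_left[OF tendsto_beta_kernel[OF \<open>x > 0\<close>], of "real N"]
    by (intro tendsto_sum_atMost_bounded_kernel[where B = "real N * B"]) (auto simp: abs_mult mult_left_mono)
  then show ?thesis
    by (simp add: x_def beta_kernel_def atLeast0AtMost)
qed

end
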